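(* Let $f$ be a complex polynomial of degree $d$ with $f(0)\neq 0$, with roots $\zeta_1,\dots,\zeta_d$ (counted with multiplicity) ordered so that $|\zeta_1|\le\cdots\le|\zeta_d|$, and assume not all roots have the same modulus. Let $\rho=\min\{|\zeta_{i+1}|/|\zeta_i| : |\zeta_{i+1}|>|\zeta_i|\}$. Let $N$ be a positive integer with \[ N > 3+\log_2\frac{d\log 2}{\log\rho}, \] let $g=G^Nf=\sum_{i=0}^d g_ix^i$ and $r_i=-2^{-N}\log|g_i|\in\mathbb{R}\cup\{+\infty\}$ for $i=0,\dots,d$. Then the Strict Convex Hull procedure (described in the context) with input $N,d,r=(r_0,\dots,r_d),\rho$ returns exactly the increasing list of the elements of \[ I=\{0,d\}\cup\{i : 1\le i\le d-1,\ |\zeta_i|<|\zeta_{i+1}|\}, \] i.e. the abscissae of the sharp corners of the convex piecewise linear function on $[0,d]$ interpolating $i\mapsto\sum_{j\le i}\log|\zeta_j|$.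
   Context: $\log$ is the natural logarithm. The Graeffe operator maps a degree $d$ polynomial $f$ to $Gf(x)=(-1)^d f(\sqrt{x})f(-\sqrt{x})$, again a degree $d$ polynomial (whose roots are the squares of those of $f$); $G^N$ is its $N$-th iterate. Usual conventions for $+\infty$ are used in comparisons and arithmetic. Strict Convex Hull procedure, input $N,d,r_0,\dots,r_d,\rho$: set $R=\rho^{2^N}$ and \[ E=\tfrac12\Big(2^{-N+1}\log(2^d+2^dR^{-1})-2^{-N+2}\log(1-2^dR^{-1})+\tfrac{\log\rho}{2}\Big). \] Initialize a list with $\Lambda_0=0$ and $j=0$. For $i=1,2,\dots,d$ in turn: while $j>0$ and \[ \frac{r_{\Lambda_j}-r_{\Lambda_{j-1}}}{\Lambda_j-\Lambda_{j-1}} > \frac{r_i-r_{\Lambda_j}}{i-\Lambda_j}-E, \] set $j\leftarrow j-1$ (discarding $\Lambda_j$); then set $j\leftarrow j+1$ and $\Lambda_j\leftarrow i$. After the loop, return $(\Lambda_0,\dots,\Lambda_j)$. *)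

theory Defs
  imports "HOL-Computational_Algebra.Polynomial" "HOL-Library.Extended_Real"
begin

(* Graeffe operator: G f is the (unique) polynomial with (G f)(x^2) = (-1)^d f(x) f(-x),
   i.e. G f (x) = (-1)^d f(sqrt x) f(-sqrt x). *)
definition graeffe :: "complex poly \<Rightarrow> complex poly" where
  "graeffe f = (THE g. pcompose g [:0, 0, 1:] =
                  smult ((-1) ^ degree f) (f * pcompose f [:0, -1:]))"

(* Inner "while" loop of the Strict Convex Hull procedure.  The stack is stored
   reversed: the head is Lambda_j, the next element Lambda_{j-1}; "j > 0" means
   the stack has at least two elements. *)
fun sch_pop :: "real \<Rightarrow> (nat \<Rightarrow> ereal) \<Rightarrow> nat \<Rightarrow> nat list \<Rightarrow> nat list" where
  "sch_pop E r i (a # b # rest) =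
     (if (r a - r b) / ereal (real a - real b) > (r i - r a) / ereal (real i - real a) - ereal E
      then sch_pop E r i (b # rest) else a # b # rest)"
| "sch_pop E r i st = st"

definition sch_E :: "nat \<Rightarrow> nat \<Rightarrow> real \<Rightarrow> real" where
  "sch_E N d \<rho> = (let R = \<rho> ^ (2 ^ N) in
     (1/2) * (2 powr (1 - real N) * ln (2 ^ d + 2 ^ d / R)
              - 2 powr (2 - real N) * ln (1 - 2 ^ d / R) + ln \<rho> / 2))"

definition strict_convex_hull :: "nat \<Rightarrow> nat \<Rightarrow> (nat \<Rightarrow> ereal) \<Rightarrow> real \<Rightarrow> nat list" where
  "strict_convex_hull N d r \<rho> =
     rev (foldl (\<lambda>st i. i # sch_pop (sch_E N d \<rho>) r i st) [0] [1..<d+1])"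

end

theory Submission
  imports Defs
begin

(* Write f = c (x - zeta_1) ... (x - zeta_d) and M = 2^N. The N-th Graeffe iterate is
   c^M (x - zeta_1^M) ... (x - zeta_d^M), so by Vieta its k-th coefficient is a sum of at most 2^d
   terms c^M prod_{i not in X} (-zeta_i^M) over the k-subsets X of {1..d}. No term is larger in
   modulus than the one for X = {1..k}, namely (|c| prod_{i>k} |zeta_i|)^M, and when k is a corner
   (so |zeta_(k+1)| >= rho |zeta_k|) all other terms are smaller by a factor rho^M. Hence r_k lies
   within -ln(1 - 2^d / rho^M) / M of L_k = -ln(|c| prod_{i>k} |zeta_i|) at the corners, and above
   L_k - d ln 2 / M elsewhere. L is convex and piecewise linear, its slopes ln |zeta_k| jumping by at
   least ln rho exactly at the corners. The bound on N makes the tolerance E of the procedure exceed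
   the errors of r but stay below these jumps, so after step k the stack holds the corners up to k,
   topped by non-corners that all get popped at the next corner. *)

section \<open>Graeffe iterates of a factored polynomial\<close>

lemma poly_pcompose_square: "poly (pcompose g [:0, 0, 1:]) (x::complex) = poly g (x\<^sup>2)"
  by (simp add: poly_pcompose power2_eq_square)

lemma pcompose_square_inject:
  fixes g h :: "complex poly"
  assumes "pcompose g [:0, 0, 1:] = pcompose h [:0, 0, 1:]"
  shows "g = h"
proof (rule poly_eq_poly_eq_iff[THEN iffD1], rule ext)
  fix y
  have "poly g ((csqrt y)\<^sup>2) = poly h ((csqrt y)\<^sup>2)"
    using arg_cong[OF assms, of "\<lambda>p. poly p (csqrt y)"] by (simp add: poly_pcompose_square)
  then show "poly g y = poly h y" by simp
qed

lemma graeffe_eqI: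
  assumes "pcompose g [:0, 0, 1:] = smult ((-1) ^ degree f) (f * pcompose f [:0, -1:])"
  shows "graeffe f = g"
  unfolding graeffe_def using assms pcompose_square_inject by (intro the_equality) auto

lemma graeffe_smult_prod_linear:
  fixes z :: "'a \<Rightarrow> complex"
  assumes "finite A" "a \<noteq> 0"
  shows "graeffe (smult a (\<Prod>i\<in>A. [:- z i, 1:])) = smult (a\<^sup>2) (\<Prod>i\<in>A. [:- (z i)\<^sup>2, 1:])"
proof -
  define f where "f = smult a (\<Prod>i\<in>A. [:- z i, 1:])"
  define g where "g = smult (a\<^sup>2) (\<Prod>i\<in>A. [:- (z i)\<^sup>2, 1:])"
  have "poly (pcompose g [:0, 0, 1:]) x = poly (smult ((-1) ^ degree f) (f * pcompose f [:0, -1:])) x"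
    for x
  proof -
    have "x\<^sup>2 - (z i)\<^sup>2 = (-1) * ((x - z i) * (- z i - x))" for i
      by (simp add: algebra_simps power2_eq_square)
    then have "poly (pcompose g [:0, 0, 1:]) x = a\<^sup>2 * (\<Prod>i\<in>A. (-1) * ((x - z i) * (- z i - x)))"
      by (simp add: g_def poly_pcompose_square poly_prod)
    also have "\<dots> = (-1) ^ card A * ((a * (\<Prod>i\<in>A. x - z i)) * (a * (\<Prod>i\<in>A. - z i - x)))"
      by (simp only: prod.distrib prod_constant) (simp add: power2_eq_square algebra_simps)
    also have "\<dots> = poly (smult ((-1) ^ degree f) (f * pcompose f [:0, -1:])) x"
      using assms by (simp add: f_def degree_prod_sum_eq poly_pcompose poly_prod)
    finally show ?thesis .
  qed
  then have "graeffe f = g" by (intro graeffe_eqI poly_eq_poly_eq_iff[THEN iffD1] ext)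
  then show ?thesis by (simp add: f_def g_def)
qed

lemma funpow_graeffe_smult_prod_linear:
  fixes z :: "'a \<Rightarrow> complex"
  assumes "finite A" "a \<noteq> 0"
  shows "(graeffe ^^ N) (smult a (\<Prod>i\<in>A. [:- z i, 1:]))
           = smult (a ^ 2 ^ N) (\<Prod>i\<in>A. [:- (z i ^ 2 ^ N), 1:])"
proof (induction N)
  case (Suc N)
  with assms show ?case
    by (simp add: graeffe_smult_prod_linear power_mult[symmetric] mult.commute)
qed simp

section \<open>Estimates for the coefficients\<close>

lemma coeff_prod_linear:
  fixes b :: "'a \<Rightarrow> 'b::comm_ring_1"
  assumes "finite A"
  shows "coeff (\<Prod>i\<in>A. [:- b i, 1:]) k = (\<Sum>X | X \<subseteq> A \<and> card X = k. \<Prod>i\<in>A - X. - b i)"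
proof -
  have const: "(\<Prod>i\<in>B. [:- b i:]) = [:\<Prod>i\<in>B. - b i:]" for B
    by (induction B rule: infinite_finite_induct) auto
  have "(\<Prod>i\<in>A. [:- b i, 1:]) = (\<Prod>i\<in>A. [:0, 1:] + [:- b i:])"
    by (intro prod.cong) (simp_all add: pCons_one[symmetric] one_pCons)
  also have "\<dots> = (\<Sum>X\<in>Pow A. monom (\<Prod>i\<in>A - X. - b i) (card X))"
    unfolding prod_add[OF assms] const by (simp add: monom_altdef)
  finally have "coeff (\<Prod>i\<in>A. [:- b i, 1:]) k = (\<Sum>X\<in>Pow A. if card X = k then \<Prod>i\<in>A - X. - b i else 0)"
    by (simp add: coeff_sum)
  also have "\<dots> = (\<Sum>X\<in>{X \<in> Pow A. card X = k}. \<Prod>i\<in>A - X. - b i)"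
    using assms by (simp add: sum.inter_filter[symmetric])
  also have "{X \<in> Pow A. card X = k} = {X. X \<subseteq> A \<and> card X = k}" by auto
  finally show ?thesis .
qed

lemma prod_le_prod_top:
  fixes x :: "nat \<Rightarrow> real"
  assumes "\<And>i j. 1 \<le> i \<Longrightarrow> i \<le> j \<Longrightarrow> j \<le> n \<Longrightarrow> x i \<le> x j"
    and "\<And>i. 1 \<le> i \<Longrightarrow> i \<le> n \<Longrightarrow> 0 \<le> x i"
    and "T \<subseteq> {1..n}" "card T + k = n"
  shows "prod x T \<le> prod x {k<..n}"
  using assms
proof (induction n arbitrary: T k)
  case 0
  then show ?case by simp
next
  case (Suc n)
  have IH: "prod x T' \<le> prod x {k'<..n}" if "T' \<subseteq> {1..n}" "card T' + k' = n" for T' k'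
    using Suc.IH[OF _ _ that] Suc.prems(1,2) by simp
  have fin: "finite T" using Suc.prems(3) finite_subset by blast
  have x_top: "0 \<le> x (Suc n)" using Suc.prems(2) by simp
  show ?case
  proof (cases "Suc n \<in> T")
    case True
    moreover have "0 < card T" using True fin by (auto simp: card_gt_0_iff)
    ultimately have "T - {Suc n} \<subseteq> {1..n}" "card (T - {Suc n}) + k = n"
      using Suc.prems(3,4) fin by (auto simp: le_Suc_eq card_Diff_singleton)
    then have "x (Suc n) * prod x (T - {Suc n}) \<le> x (Suc n) * prod x {k<..n}"
      using IH x_top by (intro mult_left_mono) auto
    moreover have "{k<..Suc n} = insert (Suc n) {k<..n}" using \<open>card (T - {Suc n}) + k = n\<close> by auto
    ultimately show ?thesis using True fin by (simp add: prod.remove)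
  next
    case False
    then have T: "T \<subseteq> {1..n}" using Suc.prems(3) by (auto simp: le_Suc_eq)
    show ?thesis
    proof (cases "k = Suc n")
      case True
      with Suc.prems(4) fin show ?thesis by simp
    next
      case False
      have "card T \<le> n" using card_mono[OF _ T] by simp
      with False Suc.prems(4) have k: "1 \<le> k" "k \<le> n" by auto
      have "prod x T \<le> prod x {k - 1<..n}" using IH[OF T] Suc.prems(4) k by simp
      also have "{k - 1<..n} = insert k {k<..n}" using k by auto
      also have "prod x \<dots> = x k * prod x {k<..n}" by simp
      also have "\<dots> \<le> x (Suc n) * prod x {k<..n}"
        using Suc.prems(1,2) k by (intro mult_right_mono prod_nonneg) auto
      also have "\<dots> = prod x (insert (Suc n) {k<..n})" by simp
      also have "insert (Suc n) {k<..n} = {k<..Suc n}" using k by auto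
      finally show ?thesis .
    qed
  qed
qed

lemma prod_le_prod_top_gap:
  fixes x :: "nat \<Rightarrow> real"
  assumes mono: "\<And>i j. 1 \<le> i \<Longrightarrow> i \<le> j \<Longrightarrow> j \<le> n \<Longrightarrow> x i \<le> x j"
    and nonneg: "\<And>i. 1 \<le> i \<Longrightarrow> i \<le> n \<Longrightarrow> 0 \<le> x i"
    and "k < n" "0 \<le> \<rho>" "\<rho> * x k \<le> x (Suc k)"
    and T: "T \<subseteq> {1..n}" "card T + k = n" "T \<noteq> {k<..n}"
  shows "\<rho> * prod x T \<le> prod x {k<..n}"
proof -
  have fin: "finite T" using T(1) finite_subset by blast
  have "\<not> T \<subseteq> {k<..n}"
    using card_subset_eq[of "{k<..n}" T] T by auto
  with T(1) obtain t where t: "t \<in> T" "1 \<le> t" "t \<le> k" by fastforce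
  have "T - {t} \<subseteq> {1..n}" "card (T - {t}) + Suc k = n"
    using T fin t assms(3) by (auto simp: card_Diff_singleton)
  then have top: "prod x (T - {t}) \<le> prod x {Suc k<..n}"
    using prod_le_prod_top[where x = x and n = n] mono nonneg by blast
  have "\<rho> * prod x T = (\<rho> * x t) * prod x (T - {t})"
    using t fin by (simp add: prod.remove)
  also have "\<dots> \<le> x (Suc k) * prod x {Suc k<..n}"
  proof (intro mult_mono)
    show "\<rho> * x t \<le> x (Suc k)"
      using mult_left_mono[OF mono[of t k] \<open>0 \<le> \<rho>\<close>] t assms(3,5) by linarith
    show "0 \<le> x (Suc k)" "0 \<le> prod x (T - {t})"
      using nonneg assms(3) T(1) by (auto intro!: prod_nonneg)
  qed (rule top)
  also have "{Suc k<..n} = {k<..n} - {Suc k}" by auto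
  also have "x (Suc k) * prod x \<dots> = prod x {k<..n}"
    using assms(3) by (simp add: prod.remove[symmetric])
  finally show ?thesis .
qed

lemma norm_sum_k_subsets_le:
  fixes h :: "nat set \<Rightarrow> 'a::real_normed_vector"
  assumes "S \<subseteq> {X. X \<subseteq> {1..d} \<and> card X = k}" "\<And>X. X \<in> S \<Longrightarrow> norm (h X) \<le> B" "0 \<le> B"
  shows "norm (\<Sum>X\<in>S. h X) \<le> 2 ^ d * B"
proof -
  have fin: "finite {X. X \<subseteq> {1..d} \<and> card X = k}" by simp
  have "card S \<le> d choose k"
    using card_mono[OF fin assms(1)] n_subsets[of "{1..d}" k] by simp
  also have "\<dots> \<le> 2 ^ d" by (rule binomial_le_pow2)
  finally have card: "real (card S) \<le> 2 ^ d" by (simp add: of_nat_le_iff[symmetric])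
  have "norm (\<Sum>X\<in>S. h X) \<le> (\<Sum>X\<in>S. norm (h X))" by (rule norm_sum)
  also have "\<dots> \<le> real (card S) * B" using sum_bounded_above[of S "\<lambda>X. norm (h X)" B] assms(2) by simp
  also have "\<dots> \<le> 2 ^ d * B" using card assms(3) by (rule mult_right_mono)
  finally show ?thesis .
qed

lemma norm_prod_uminus_power:
  fixes \<zeta> :: "nat \<Rightarrow> 'a::{real_normed_field}"
  shows "norm (\<Prod>i\<in>T. - (\<zeta> i ^ M)) = (\<Prod>i\<in>T. norm (\<zeta> i)) ^ M"
  by (simp add: prod_norm[symmetric] norm_power prod_power_distrib)

lemma norm_coeff_prod_linear_power_le:
  fixes \<zeta> :: "nat \<Rightarrow> complex"
  assumes sorted: "\<And>i j. 1 \<le> i \<Longrightarrow> i \<le> j \<Longrightarrow> j \<le> d \<Longrightarrow> norm (\<zeta> i) \<le> norm (\<zeta> j)"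
  shows "norm (coeff (\<Prod>i=1..d. [:- (\<zeta> i ^ M), 1:]) k) \<le> 2 ^ d * (\<Prod>i\<in>{k<..d}. norm (\<zeta> i)) ^ M"
proof -
  have "norm (\<Prod>i\<in>{1..d} - X. - (\<zeta> i ^ M)) \<le> (\<Prod>i\<in>{k<..d}. norm (\<zeta> i)) ^ M"
    if X: "X \<subseteq> {1..d}" "card X = k" for X
  proof -
    have "card ({1..d} - X) + k = d"
      using X card_mono[OF _ X(1)] by (simp add: card_Diff_subset finite_subset)
    then have "(\<Prod>i\<in>{1..d} - X. norm (\<zeta> i)) \<le> (\<Prod>i\<in>{k<..d}. norm (\<zeta> i))"
      using sorted by (intro prod_le_prod_top) auto
    then show ?thesis
      unfolding norm_prod_uminus_power by (intro power_mono) (auto intro: prod_nonneg)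
  qed
  then show ?thesis
    unfolding coeff_prod_linear[OF finite_atLeastAtMost]
    by (intro norm_sum_k_subsets_le[where k = k]) (auto simp: prod_nonneg)
qed

lemma norm_coeff_prod_linear_power_dominant:
  fixes \<zeta> :: "nat \<Rightarrow> complex"
  assumes sorted: "\<And>i j. 1 \<le> i \<Longrightarrow> i \<le> j \<Longrightarrow> j \<le> d \<Longrightarrow> norm (\<zeta> i) \<le> norm (\<zeta> j)"
    and "0 < \<rho>" "k \<le> d" and gap: "1 \<le> k \<Longrightarrow> k < d \<Longrightarrow> \<rho> * norm (\<zeta> k) \<le> norm (\<zeta> (Suc k))"
  shows "norm (coeff (\<Prod>i=1..d. [:- (\<zeta> i ^ M), 1:]) k - (\<Prod>i\<in>{k<..d}. - (\<zeta> i ^ M)))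
           \<le> 2 ^ d / \<rho> ^ M * (\<Prod>i\<in>{k<..d}. norm (\<zeta> i)) ^ M"
proof -
  define S where "S = {X. X \<subseteq> {1..d::nat} \<and> card X = k}"
  define P where "P = (\<Prod>i\<in>{k<..d}. norm (\<zeta> i))"
  have "coeff (\<Prod>i=1..d. [:- (\<zeta> i ^ M), 1:]) k = (\<Sum>X\<in>S. \<Prod>i\<in>{1..d} - X. - (\<zeta> i ^ M))"
    by (simp add: coeff_prod_linear S_def)
  also have "\<dots> = (\<Prod>i\<in>{1..d} - {1..k}. - (\<zeta> i ^ M))
      + (\<Sum>X\<in>S - {{1..k}}. \<Prod>i\<in>{1..d} - X. - (\<zeta> i ^ M))"
    using assms(3) by (intro sum.remove) (auto simp: S_def)
  also have "{1..d} - {1..k} = {k<..d}" by auto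
  finally have "coeff (\<Prod>i=1..d. [:- (\<zeta> i ^ M), 1:]) k - (\<Prod>i\<in>{k<..d}. - (\<zeta> i ^ M))
      = (\<Sum>X\<in>S - {{1..k}}. \<Prod>i\<in>{1..d} - X. - (\<zeta> i ^ M))"
    by simp
  also have "norm \<dots> \<le> 2 ^ d * (P / \<rho>) ^ M"
  proof (rule norm_sum_k_subsets_le[where k = k])
    fix X assume "X \<in> S - {{1..k}}"
    then have X: "X \<subseteq> {1..d}" "card X = k" "X \<noteq> {1..k}" by (auto simp: S_def)
    have T: "card ({1..d} - X) + k = d" "{1..d} - X \<noteq> {k<..d}"
    proof -
      show "card ({1..d} - X) + k = d"
        using X card_mono[OF _ X(1)] by (simp add: card_Diff_subset finite_subset)
      show "{1..d} - X \<noteq> {k<..d}"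
      proof
        assume "{1..d} - X = {k<..d}"
        then have "X = {1..d} - {k<..d}" using X(1) by blast
        with X(3) assms(3) show False by auto
      qed
    qed
    have "k \<noteq> 0" "k \<noteq> d"
      using X card_subset_eq[of "{1..d}" X] finite_subset[OF X(1)] by auto
    then have "\<rho> * (\<Prod>i\<in>{1..d} - X. norm (\<zeta> i)) \<le> P"
      unfolding P_def using sorted T gap assms(2,3) by (intro prod_le_prod_top_gap) auto
    then have "(\<Prod>i\<in>{1..d} - X. norm (\<zeta> i)) \<le> P / \<rho>"
      using assms(2) by (simp add: pos_le_divide_eq mult.commute)
    then show "norm (\<Prod>i\<in>{1..d} - X. - (\<zeta> i ^ M)) \<le> (P / \<rho>) ^ M"
      unfolding norm_prod_uminus_power by (intro power_mono) (auto intro: prod_nonneg)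
  qed (use assms(2) in \<open>auto simp: S_def P_def prod_nonneg\<close>)
  finally show ?thesis by (simp add: P_def power_divide)
qed

lemma ln_norm_close:
  fixes z a :: "'a::real_normed_vector"
  assumes close: "norm (z - a) \<le> u * norm a" and "a \<noteq> 0" "u < 1"
  shows "z \<noteq> 0" "\<bar>ln (norm z) - ln (norm a)\<bar> \<le> - ln (1 - u)"
proof -
  have a: "0 < norm a" using assms(2) by simp
  have "0 \<le> u * norm a" using close norm_ge_zero order_trans by blast
  then have u: "0 \<le> u" using a by (simp add: zero_le_mult_iff)
  have lower: "(1 - u) * norm a \<le> norm z"
    using norm_triangle_ineq2[of a z] close by (simp add: norm_minus_commute algebra_simps)
  have upper: "norm z \<le> (1 + u) * norm a"
    using norm_triangle_ineq[of "z - a" a] close by (simp add: algebra_simps)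
  have "0 < (1 - u) * norm a" using a assms(3) by simp
  with lower have z: "0 < norm z" by linarith
  then show "z \<noteq> 0" by simp
  from \<open>0 < (1 - u) * norm a\<close> lower z have "ln ((1 - u) * norm a) \<le> ln (norm z)" by simp
  then have "ln (1 - u) + ln (norm a) \<le> ln (norm z)" using a assms(3) by (simp add: ln_mult)
  moreover have "ln (norm z) \<le> ln ((1 + u) * norm a)" using upper z a u by simp
  then have "ln (norm z) \<le> ln (1 + u) + ln (norm a)" using a u by (simp add: ln_mult)
  moreover have "ln (1 + u) \<le> - ln (1 - u)"
    using ln_add_one_self_le_self[OF u] ln_le_minus_one[of "1 - u"] assms(3) by simp
  ultimately show "\<bar>ln (norm z) - ln (norm a)\<bar> \<le> - ln (1 - u)" by linarith
qed

lemma neg_ln_coeff_graeffe_lower: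
  fixes \<zeta> :: "nat \<Rightarrow> complex" and c :: complex
  assumes sorted: "\<And>i j. 1 \<le> i \<Longrightarrow> i \<le> j \<Longrightarrow> j \<le> d \<Longrightarrow> norm (\<zeta> i) \<le> norm (\<zeta> j)"
    and nonzero: "\<And>i. 1 \<le> i \<Longrightarrow> i \<le> d \<Longrightarrow> \<zeta> i \<noteq> 0" and "c \<noteq> 0" "0 < M"
    and coeff: "coeff (smult (c ^ M) (\<Prod>i=1..d. [:- (\<zeta> i ^ M), 1:])) k \<noteq> 0"
  shows "- ln (norm c * (\<Prod>i\<in>{k<..d}. norm (\<zeta> i))) - real d * ln 2 / M
           \<le> - ln (norm (coeff (smult (c ^ M) (\<Prod>i=1..d. [:- (\<zeta> i ^ M), 1:])) k)) / M"
proof -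
  define z where "z = coeff (smult (c ^ M) (\<Prod>i=1..d. [:- (\<zeta> i ^ M), 1:])) k"
  define W where "W = norm c * (\<Prod>i\<in>{k<..d}. norm (\<zeta> i))"
  have "0 < (\<Prod>i\<in>{k<..d}. norm (\<zeta> i))" using nonzero by (intro prod_pos) auto
  then have W: "0 < W" using \<open>c \<noteq> 0\<close> by (simp add: W_def)
  have "norm z \<le> norm c ^ M * (2 ^ d * (\<Prod>i\<in>{k<..d}. norm (\<zeta> i)) ^ M)"
    using norm_coeff_prod_linear_power_le[OF sorted]
    by (simp add: z_def norm_mult norm_power mult_left_mono)
  also have "\<dots> = 2 ^ d * W ^ M" by (simp add: W_def power_mult_distrib)
  finally have "ln (norm z) \<le> ln (2 ^ d * W ^ M)" using coeff W by (simp add: z_def)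
  also have "\<dots> = real d * ln 2 + M * ln W" using W by (simp add: ln_mult ln_realpow)
  finally have "ln (norm z) / M \<le> (real d * ln 2 + M * ln W) / M" by (intro divide_right_mono) auto
  also have "\<dots> = real d * ln 2 / M + ln W" using \<open>0 < M\<close> by (simp add: add_divide_distrib)
  finally show ?thesis by (simp add: z_def W_def)
qed

lemma neg_ln_coeff_graeffe_dominant:
  fixes \<zeta> :: "nat \<Rightarrow> complex" and c :: complex
  assumes sorted: "\<And>i j. 1 \<le> i \<Longrightarrow> i \<le> j \<Longrightarrow> j \<le> d \<Longrightarrow> norm (\<zeta> i) \<le> norm (\<zeta> j)"
    and nonzero: "\<And>i. 1 \<le> i \<Longrightarrow> i \<le> d \<Longrightarrow> \<zeta> i \<noteq> 0" and "c \<noteq> 0" "0 < M"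
    and "0 < \<rho>" "2 ^ d < \<rho> ^ M" "k \<le> d"
    and gap: "1 \<le> k \<Longrightarrow> k < d \<Longrightarrow> \<rho> * norm (\<zeta> k) \<le> norm (\<zeta> (Suc k))"
  defines "z \<equiv> coeff (smult (c ^ M) (\<Prod>i=1..d. [:- (\<zeta> i ^ M), 1:])) k"
  shows "z \<noteq> 0"
    "\<bar>- ln (norm z) / M + ln (norm c * (\<Prod>i\<in>{k<..d}. norm (\<zeta> i)))\<bar> \<le> - ln (1 - 2 ^ d / \<rho> ^ M) / M"
proof -
  define P where "P = (\<Prod>i\<in>{k<..d}. norm (\<zeta> i))"
  define a where "a = c ^ M * (\<Prod>i\<in>{k<..d}. - (\<zeta> i ^ M))"
  have norm_a: "norm a = (norm c * P) ^ M"
    by (simp add: a_def P_def norm_mult norm_power norm_prod_uminus_power power_mult_distrib)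
  have "0 < P" using nonzero unfolding P_def by (intro prod_pos) auto
  then have W: "0 < norm c * P" using \<open>c \<noteq> 0\<close> by simp
  then have a: "a \<noteq> 0" using norm_a by auto
  have "norm (z - a) = norm c ^ M * norm (coeff (\<Prod>i=1..d. [:- (\<zeta> i ^ M), 1:]) k - (\<Prod>i\<in>{k<..d}. - (\<zeta> i ^ M)))"
    by (simp add: z_def a_def right_diff_distrib[symmetric] norm_mult norm_power)
  also have "\<dots> \<le> norm c ^ M * (2 ^ d / \<rho> ^ M * P ^ M)"
    using norm_coeff_prod_linear_power_dominant[OF sorted \<open>0 < \<rho>\<close> \<open>k \<le> d\<close> gap, where M = M]
    unfolding P_def by (intro mult_left_mono) auto
  also have "\<dots> = 2 ^ d / \<rho> ^ M * norm a" by (simp add: norm_a power_mult_distrib)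
  finally have close: "norm (z - a) \<le> 2 ^ d / \<rho> ^ M * norm a" .
  have "2 ^ d / \<rho> ^ M < 1" using assms(5,6) by simp
  from ln_norm_close[OF close a this] W
  have "z \<noteq> 0" and est: "\<bar>ln (norm z) - M * ln (norm c * P)\<bar> \<le> - ln (1 - 2 ^ d / \<rho> ^ M)"
    by (simp_all add: norm_a ln_realpow)
  then show "z \<noteq> 0" by simp
  have "- ln (norm z) / M + ln (norm c * P) = - ((ln (norm z) - M * ln (norm c * P)) / M)"
    using \<open>0 < M\<close> by (simp add: field_simps)
  then have "\<bar>- ln (norm z) / M + ln (norm c * P)\<bar> = \<bar>ln (norm z) - M * ln (norm c * P)\<bar> / M"
    by simp
  also have "\<dots> \<le> - ln (1 - 2 ^ d / \<rho> ^ M) / M" using est by (intro divide_right_mono) auto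
  finally show "\<bar>- ln (norm z) / M + ln (norm c * (\<Prod>i\<in>{k<..d}. norm (\<zeta> i)))\<bar>
      \<le> - ln (1 - 2 ^ d / \<rho> ^ M) / M" by (simp only: P_def)
qed

section \<open>The tolerance of the procedure\<close>

lemma two_pow_mult_ln_gt:
  assumes "0 < d" "1 < \<rho>" "real N > 3 + log 2 (real d * ln 2 / ln \<rho>)"
  shows "8 * (real d * ln 2) < 2 ^ N * ln \<rho>"
proof -
  have y: "0 < real d * ln 2 / ln \<rho>" using assms(1,2) by simp
  have "8 * (real d * ln 2 / ln \<rho>) = 2 powr (3 + log 2 (real d * ln 2 / ln \<rho>))"
    using y by (simp add: powr_add)
  also have "\<dots> < 2 powr real N" using assms(3) by simp
  finally show ?thesis using assms(2) by (simp add: powr_realpow field_simps)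
qed

lemma sch_E_eq:
  assumes "0 < \<rho>"
  shows "sch_E N d \<rho> = (real d * ln 2 + ln (1 + 1 / \<rho> ^ 2 ^ N) - 2 * ln (1 - 2 ^ d / \<rho> ^ 2 ^ N)) / 2 ^ N
           + ln \<rho> / 4"
proof -
  have "(2::real) ^ d + 2 ^ d / \<rho> ^ 2 ^ N = 2 ^ d * (1 + 1 / \<rho> ^ 2 ^ N)" by (simp add: algebra_simps)
  moreover have "0 < 1 + 1 / \<rho> ^ 2 ^ N" using assms by (simp add: add_pos_pos)
  ultimately have ln_sum: "ln (2 ^ d + 2 ^ d / \<rho> ^ 2 ^ N) = real d * ln 2 + ln (1 + 1 / \<rho> ^ 2 ^ N)"
    by (simp add: ln_mult ln_realpow)
  have powr: "2 powr (1 - real N) = 2 / 2 ^ N" "2 powr (2 - real N) = 4 / 2 ^ N"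
    by (simp_all add: powr_diff powr_realpow)
  show ?thesis unfolding sch_E_def Let_def ln_sum powr by (simp add: field_simps)
qed

lemma graeffe_ratio_small:
  assumes "0 < d" "1 < \<rho>" and big: "8 * (real d * ln 2) < 2 ^ N * ln \<rho>"
  shows "0 < 2 ^ d / \<rho> ^ 2 ^ N" "2 ^ d / \<rho> ^ 2 ^ N \<le> (1 / 128 :: real)"
proof -
  have "(2::real) ^ (8 * d) = exp (real (8 * d) * ln 2)"
    by (simp add: powr_realpow[symmetric] powr_def)
  also have "\<dots> < exp (2 ^ N * ln \<rho>)" using big by simp
  also have "\<dots> = \<rho> ^ 2 ^ N"
    using assms(2) by (simp add: powr_realpow[symmetric] powr_def)
  finally have "2 ^ d / \<rho> ^ 2 ^ N < (2::real) ^ d / 2 ^ (8 * d)"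
    using assms(2) by (intro divide_strict_left_mono) auto
  also have "(2::real) ^ (8 * d) = 2 ^ d * 2 ^ (7 * d)" by (simp add: power_add[symmetric])
  then have "(2::real) ^ d / 2 ^ (8 * d) = 1 / 2 ^ (7 * d)" by simp
  also have "\<dots> \<le> 1 / 2 ^ 7" using assms(1) by (intro divide_left_mono power_increasing) auto
  finally show "2 ^ d / \<rho> ^ 2 ^ N \<le> (1 / 128 :: real)" by simp
  show "0 < 2 ^ d / \<rho> ^ 2 ^ N" using assms(2) by simp
qed

lemma minus_ln_one_minus_le:
  fixes u :: real
  assumes "0 \<le> u" "u \<le> 1 / 2"
  shows "- ln (1 - u) \<le> 2 * u"
proof -
  have "u * u \<le> u * (1 / 2)" using assms by (intro mult_left_mono) auto
  moreover have "- u - 2 * (u * u) \<le> ln (1 - u)"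
    using ln_one_minus_pos_lower_bound[of u] assms by (simp add: power2_eq_square)
  ultimately show ?thesis by linarith
qed

lemma sch_E_bounds:
  fixes N d :: nat and \<rho> :: real
  assumes "0 < d" "1 < \<rho>" and big: "8 * (real d * ln 2) < 2 ^ N * ln \<rho>"
  defines "u \<equiv> 2 ^ d / \<rho> ^ 2 ^ N"
  defines "\<eta> \<equiv> real d * ln 2 / 2 ^ N" and "\<delta> \<equiv> - ln (1 - u) / 2 ^ N"
  shows "0 \<le> \<delta>" "2 * (\<eta> + \<delta>) < sch_E N d \<rho>" "sch_E N d \<rho> + \<eta> + 4 * \<delta> \<le> ln \<rho>"
proof -
  define M :: real where "M = 2 ^ N"
  define l where "l = ln (1 + 1 / \<rho> ^ 2 ^ N)"
  have u: "0 < u" "u \<le> 1 / 128" using graeffe_ratio_small[OF assms(1-3)] by (simp_all add: u_def)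
  have ln_u: "0 \<le> - ln (1 - u)" "- ln (1 - u) \<le> 2 * u"
    using u minus_ln_one_minus_le[of u] by simp_all
  then show "0 \<le> \<delta>" unfolding \<delta>_def by (simp add: divide_nonpos_pos)
  have "1 / \<rho> ^ 2 ^ N \<le> u"
    unfolding u_def using assms(2) by (intro divide_right_mono) auto
  then have l: "0 \<le> l" "l \<le> u"
    using ln_add_one_self_le_self[of "1 / \<rho> ^ 2 ^ N"] assms(2) by (auto simp: l_def)
  have "1 * (1 / 2) \<le> real d * ln (2::real)"
    using assms(1) ln_le_minus_one[of "1/2::real"] by (intro mult_mono) (auto simp: ln_div)
  moreover have "sch_E N d \<rho> * M = real d * ln 2 + l - 2 * ln (1 - u) + M * ln \<rho> / 4"
    using sch_E_eq[of \<rho> N d] assms(2) by (simp add: M_def l_def u_def field_simps)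
  moreover have "\<eta> * M = real d * ln 2" "\<delta> * M = - ln (1 - u)"
    by (simp_all add: \<eta>_def \<delta>_def M_def)
  moreover have "8 * (real d * ln 2) < M * ln \<rho>" using big by (simp add: M_def)
  ultimately have "2 * (\<eta> + \<delta>) * M < sch_E N d \<rho> * M"
    "(sch_E N d \<rho> + \<eta> + 4 * \<delta>) * M \<le> ln \<rho> * M"
    using ln_u l u by (simp_all add: algebra_simps)
  then show "2 * (\<eta> + \<delta>) < sch_E N d \<rho>" "sch_E N d \<rho> + \<eta> + 4 * \<delta> \<le> ln \<rho>"
    by (simp_all add: M_def)
qed

section \<open>The Strict Convex Hull procedure on perturbed data\<close>

definition sch_pops :: "real \<Rightarrow> (nat \<Rightarrow> ereal) \<Rightarrow> nat \<Rightarrow> nat \<Rightarrow> nat \<Rightarrow> bool" where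
  "sch_pops E r a b i \<longleftrightarrow>
     (r i - r a) / ereal (real i - real a) - ereal E < (r a - r b) / ereal (real a - real b)"

lemma sch_pop_Cons_Cons:
  "sch_pop E r i (a # b # rest) = (if sch_pops E r a b i then sch_pop E r i (b # rest) else a # b # rest)"
  by (simp add: sch_pops_def)

declare sch_pop.simps(1) [simp del] sch_pop_Cons_Cons [simp]

lemma sch_pops_real_iff:
  assumes "r a = ereal A" "r b = ereal B" "r i = ereal C" "b < a" "a < i"
  shows "sch_pops E r a b i \<longleftrightarrow> (C - A) / (real i - real a) - E < (A - B) / (real a - real b)"
  using assms by (simp add: sch_pops_def)

lemma sch_pops_if_top_infinite:
  "r a = \<infinity> \<Longrightarrow> r i = ereal C \<Longrightarrow> b < a \<Longrightarrow> a < i \<Longrightarrow> sch_pops E r a b i"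
  by (cases "r b") (simp_all add: sch_pops_def)

lemma not_sch_pops_if_new_infinite:
  "r i = \<infinity> \<Longrightarrow> r a = ereal A \<Longrightarrow> r b = ereal B \<Longrightarrow> b < a \<Longrightarrow> a < i \<Longrightarrow> \<not> sch_pops E r a b i"
  by (simp add: sch_pops_def)

lemma sch_pop_append:
  assumes stop: "sch_pop E r i st = st" and "st \<noteq> []"
  obtains j where "sch_pop E r i (ns @ st) = drop j ns @ st"
    and "\<And>n ns'. drop j ns = n # ns' \<Longrightarrow> \<not> sch_pops E r n (hd (ns' @ st)) i"
proof -
  have "\<exists>j. sch_pop E r i (ns @ st) = drop j ns @ st \<and>
          (\<forall>n ns'. drop j ns = n # ns' \<longrightarrow> \<not> sch_pops E r n (hd (ns' @ st)) i)"
  proof (induction ns)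
    case Nil
    show ?case using stop by (intro exI[of _ 0]) simp
  next
    case (Cons n ns)
    obtain p rest where p: "ns @ st = p # rest" using \<open>st \<noteq> []\<close> by (cases "ns @ st") auto
    show ?case
    proof (cases "sch_pops E r n p i")
      case True
      with Cons.IH p show ?thesis by (auto intro: exI[of _ "Suc _"])
    next
      case False
      with p show ?thesis by (intro exI[of _ 0]) simp
    qed
  qed
  with that show thesis by blast
qed

definition steep_chord :: "real \<Rightarrow> (nat \<Rightarrow> ereal) \<Rightarrow> nat \<Rightarrow> nat \<Rightarrow> bool" where
  "steep_chord \<sigma> r n p \<longleftrightarrow> p < n \<and>
     (r n \<noteq> \<infinity> \<longrightarrow> r p \<noteq> \<infinity> \<and> \<sigma> \<le> (real_of_ereal (r n) - real_of_ereal (r p)) / (real n - real p))"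

lemma chord_slope_le:
  fixes t X m e :: real
  assumes "1 \<le> X" "0 \<le> e" "t \<le> X * m + e"
  shows "t / X \<le> m + e"
proof -
  have "e \<le> X * e" using assms by (simp add: mult_le_cancel_right1)
  with assms show ?thesis by (simp add: pos_divide_le_eq algebra_simps)
qed

lemma chord_slope_ge:
  fixes t X m e :: real
  assumes "1 \<le> X" "0 \<le> e" "X * m - e \<le> t"
  shows "m - e \<le> t / X"
proof -
  have "e \<le> X * e" using assms by (simp add: mult_le_cancel_right1)
  with assms have "(m - e) * X \<le> t" by (simp add: algebra_simps)
  with assms show ?thesis by (simp add: pos_le_divide_eq)
qed

locale perturbed_hull =
  fixes d :: nat and I :: "nat set" and s L :: "nat \<Rightarrow> real" and r :: "nat \<Rightarrow> ereal"
    and \<delta> \<eta> E gap :: real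
  assumes corners_subset: "I \<subseteq> {0..d}" and zero_corner: "0 \<in> I" and d_corner: "d \<in> I"
    and slope_mono: "\<And>j k. 1 \<le> j \<Longrightarrow> j \<le> k \<Longrightarrow> k \<le> d \<Longrightarrow> s j \<le> s k"
    and L_Suc: "\<And>k. k < d \<Longrightarrow> L (Suc k) = L k + s (Suc k)"
    and corner_iff: "\<And>k. 1 \<le> k \<Longrightarrow> k < d \<Longrightarrow> k \<in> I \<longleftrightarrow> s k < s (Suc k)"
    and corner_gap: "\<And>k. 1 \<le> k \<Longrightarrow> k < d \<Longrightarrow> k \<in> I \<Longrightarrow> s k + gap \<le> s (Suc k)"
    and r_corner: "\<And>k. k \<in> I \<Longrightarrow> \<exists>v. r k = ereal v \<and> \<bar>v - L k\<bar> \<le> \<delta>"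
    and r_other: "\<And>k. k \<le> d \<Longrightarrow> k \<notin> I \<Longrightarrow> r k = \<infinity> \<or> (\<exists>v. r k = ereal v \<and> L k - \<eta> \<le> v)"
    and \<delta>_nonneg: "0 \<le> \<delta>" and \<eta>_nonneg: "0 \<le> \<eta>"
    and E_gt: "2 * (\<eta> + \<delta>) < E" and E_le: "E + \<eta> + 4 * \<delta> \<le> gap"
begin

lemma slope_after_corner:
  assumes "c < j" "j \<le> n" "n \<le> d" "{c<..<n} \<inter> I = {}"
  shows "s j = s (Suc c)"
proof -
  have "Suc c \<le> j" using assms(1) by simp
  then show ?thesis
  proof (induction j rule: dec_induct)
    case (step m)
    then have "m \<in> {c<..<n}" using assms(2) by auto
    then have "m \<notin> I" using assms(4) by blast
    then show ?case using step corner_iff[of m] slope_mono[of m "Suc m"] assms(2,3) by force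
  qed simp
qed

lemma L_after_corner:
  assumes "c \<le> n" "n \<le> d" "{c<..<n} \<inter> I = {}"
  shows "L n = L c + (real n - real c) * s (Suc c)"
  using assms(1)
proof (induction n rule: dec_induct)
  case (step m)
  have "s (Suc m) = s (Suc c)"
    using slope_after_corner[of c "Suc m" n] step assms by auto
  with step L_Suc[of m] assms(2) show ?case by (simp add: algebra_simps)
qed simp

lemma L_beyond_corner:
  assumes "1 \<le> c" "c \<in> I" "c < i" "i \<le> d"
  shows "(real i - real c) * (s c + gap) \<le> L i - L c"
proof -
  have "Suc c \<le> i" using assms(3) by simp
  then show ?thesis
  proof (induction i rule: dec_induct)
    case base
    then show ?case using corner_gap[of c] L_Suc[of c] assms by simp
  next
    case (step m)
    have "s (Suc c) \<le> s (Suc m)" using slope_mono[of "Suc c" "Suc m"] step assms(4) by simp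
    with step corner_gap[of c] L_Suc[of m] assms show ?case by (simp add: algebra_simps)
  qed
qed

lemma r_lower: "k \<le> d \<Longrightarrow> r k = \<infinity> \<or> (\<exists>v. r k = ereal v \<and> L k - \<eta> - \<delta> \<le> v)"
  using r_corner[of k] r_other[of k] \<delta>_nonneg \<eta>_nonneg by (cases "k \<in> I") force+

lemma r_finite: "k \<le> d \<Longrightarrow> r k \<noteq> \<infinity> \<Longrightarrow> \<exists>v. r k = ereal v"
  using r_lower by blast

definition corners_upto :: "nat \<Rightarrow> nat list" where
  "corners_upto k = filter (\<lambda>j. j \<in> I) (rev [0..<Suc k])"

abbreviation last_corner :: "nat \<Rightarrow> nat" where
  "last_corner k \<equiv> hd (corners_upto k)"

abbreviation min_slope :: "nat \<Rightarrow> real" where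
  "min_slope k \<equiv> s (Suc (last_corner k)) - (\<eta> + \<delta>)"

lemma corners_upto_0: "corners_upto 0 = [0]"
  using zero_corner by (simp add: corners_upto_def)

lemma corners_upto_Suc:
  "corners_upto (Suc k) = (if Suc k \<in> I then Suc k # corners_upto k else corners_upto k)"
  by (simp add: corners_upto_def)

lemma last_corner_spec:
  "corners_upto k \<noteq> [] \<and> last_corner k \<in> I \<and> last_corner k \<le> k \<and> {last_corner k<..k} \<inter> I = {}"
proof (induction k)
  case 0
  then show ?case using zero_corner by (simp add: corners_upto_0)
next
  case (Suc k)
  then show ?case by (auto simp: corners_upto_Suc le_Suc_eq)
qed

lemma corners_upto_Cons: obtains cs where "corners_upto k = last_corner k # cs"
  using last_corner_spec[of k] by (cases "corners_upto k") auto

lemma corners_upto_consecutive: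
  "corners_upto k = a # b # rest \<Longrightarrow> b \<in> I \<and> b < a \<and> {b<..<a} \<inter> I = {}"
proof (induction k arbitrary: a b rest)
  case 0
  then show ?case by (simp add: corners_upto_0)
next
  case (Suc k)
  show ?case
  proof (cases "Suc k \<in> I")
    case True
    with Suc.prems last_corner_spec[of k] show ?thesis
      by (auto simp: corners_upto_Suc less_Suc_eq_le elim: corners_upto_Cons)
  next
    case False
    with Suc show ?thesis by (simp add: corners_upto_Suc)
  qed
qed

lemma sch_pop_corners_upto:
  assumes "k < d"
  shows "sch_pop E r (Suc k) (corners_upto k) = corners_upto k"
proof (cases "corners_upto k" rule: sch_pop.cases[of "(E, r, Suc k, _)", simplified])
  case (1 a b rest)
  then have b: "b \<in> I" "b < a" "{b<..<a} \<inter> I = {}" and a: "a \<in> I" "a \<le> k"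
    using corners_upto_consecutive last_corner_spec[of k] by auto
  obtain A where A: "r a = ereal A" "\<bar>A - L a\<bar> \<le> \<delta>" using r_corner a(1) by blast
  obtain B where B: "r b = ereal B" "\<bar>B - L b\<bar> \<le> \<delta>" using r_corner b(1) by blast
  have "\<not> sch_pops E r a b (Suc k)"
  proof (cases "r (Suc k) = \<infinity>")
    case True
    with A B b a show ?thesis using not_sch_pops_if_new_infinite by simp
  next
    case False
    then obtain C where C: "r (Suc k) = ereal C" "L (Suc k) - \<eta> - \<delta> \<le> C"
      using r_lower[of "Suc k"] assms by auto
    have "L a = L b + (real a - real b) * s (Suc b)" "s a = s (Suc b)"
      using L_after_corner[of b a] slope_after_corner[of b a a] a b assms by auto
    then have "(A - B) / (real a - real b) \<le> s a + 2 * \<delta>"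
      using A B b by (intro chord_slope_le) (auto simp: abs_le_iff \<delta>_nonneg)
    moreover have "(real (Suc k) - real a) * (s a + gap) \<le> L (Suc k) - L a"
      using L_beyond_corner[of a "Suc k"] a b assms by simp
    then have "s a + gap - (\<eta> + 2 * \<delta>) \<le> (C - A) / (real (Suc k) - real a)"
      using A C a \<delta>_nonneg \<eta>_nonneg by (intro chord_slope_ge) (auto simp: abs_le_iff)
    ultimately show ?thesis
      using sch_pops_real_iff[OF A(1) B(1) C(1)] a b E_le by simp
  qed
  with 1 show ?thesis by simp
qed simp_all

lemma sch_pops_at_corner:
  assumes "Suc k \<in> I" "k < d" "n \<in> {last_corner k<..k}" "n \<notin> I"
    and steep: "steep_chord (min_slope k) r n p"
  shows "sch_pops E r n p (Suc k)"
proof -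
  define c where "c = last_corner k"
  have c: "{c<..<Suc k} \<inter> I = {}" "c \<le> k"
    using last_corner_spec[of k] unfolding c_def by (auto simp: less_Suc_eq_le disjoint_iff)
  have pn: "p < n" using steep by (simp add: steep_chord_def)
  obtain C where C: "r (Suc k) = ereal C" "\<bar>C - L (Suc k)\<bar> \<le> \<delta>" using r_corner assms(1) by blast
  show ?thesis
  proof (cases "r n = \<infinity>")
    case True
    with C pn assms(3) show ?thesis by (intro sch_pops_if_top_infinite) auto
  next
    case False
    then obtain V where V: "r n = ereal V" "L n - \<eta> \<le> V" using r_other[of n] assms by auto
    with steep obtain P where P: "r p = ereal P"
      and slope_pn: "s (Suc c) - (\<eta> + \<delta>) \<le> (V - P) / (real n - real p)"
      using r_finite[of p] pn assms(2,3) unfolding steep_chord_def c_def by force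
    have "{c<..<n} \<subseteq> {c<..<Suc k}" using assms(3) by auto
    with c(1) have "{c<..<n} \<inter> I = {}" by blast
    then have "L n = L c + (real n - real c) * s (Suc c)"
      "L (Suc k) = L c + (real (Suc k) - real c) * s (Suc c)"
      using L_after_corner[of c n] L_after_corner[of c "Suc k"] c assms(2,3)
      unfolding c_def by auto
    then have "(C - V) / (real (Suc k) - real n) \<le> s (Suc c) + (\<eta> + \<delta>)"
      using C V assms(3) \<delta>_nonneg \<eta>_nonneg
      by (intro chord_slope_le) (auto simp: abs_le_iff algebra_simps)
    with slope_pn E_gt pn assms(3) show ?thesis
      by (simp add: sch_pops_real_iff[OF V(1) P C(1)])
  qed
qed

lemma steep_chord_last_corner:
  assumes "Suc k \<notin> I" "k < d"
  shows "steep_chord (min_slope k) r (Suc k) (last_corner k)"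
proof -
  define c where "c = last_corner k"
  have c: "c \<in> I" "c \<le> k" "{c<..<Suc k} \<inter> I = {}"
    using last_corner_spec[of k] unfolding c_def by (auto simp: less_Suc_eq_le disjoint_iff)
  obtain A where A: "r c = ereal A" "\<bar>A - L c\<bar> \<le> \<delta>" using r_corner c(1) by blast
  have "s (Suc c) - (\<eta> + \<delta>) \<le> (V - A) / (real (Suc k) - real c)"
    if V: "r (Suc k) = ereal V" "L (Suc k) - \<eta> \<le> V" for V
  proof -
    have "L (Suc k) = L c + (real (Suc k) - real c) * s (Suc c)"
      using L_after_corner[of c "Suc k"] c assms by auto
    with A V c show ?thesis using \<delta>_nonneg \<eta>_nonneg
      by (intro chord_slope_ge) (auto simp: abs_le_iff algebra_simps)
  qed
  with A c r_other[of "Suc k"] assms show ?thesis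
    unfolding steep_chord_def c_def by auto
qed

lemma steep_chord_if_not_popped:
  assumes "t \<le> k" "k < d" and steep: "steep_chord \<sigma> r t p"
    and kept: "\<not> sch_pops E r t p (Suc k)"
  shows "steep_chord \<sigma> r (Suc k) t"
proof -
  have pt: "p < t" using steep by (simp add: steep_chord_def)
  have "r t \<noteq> \<infinity> \<and> \<sigma> \<le> (V - real_of_ereal (r t)) / (real (Suc k) - real t)"
    if V: "r (Suc k) = ereal V" for V
  proof -
    have "r t \<noteq> \<infinity>" using sch_pops_if_top_infinite[of r t "Suc k" V] V pt kept assms(1) by auto
    with steep obtain T P where T: "r t = ereal T" and P: "r p = ereal P"
      and "\<sigma> \<le> (T - P) / (real t - real p)"
      using r_finite[of t] r_finite[of p] pt assms(1,2) unfolding steep_chord_def by force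
    moreover have "(T - P) / (real t - real p) \<le> (V - T) / (real (Suc k) - real t) - E"
      using kept sch_pops_real_iff[OF T P V] pt assms(1) by simp
    ultimately show ?thesis using E_gt \<delta>_nonneg \<eta>_nonneg by simp
  qed
  with r_finite[of "Suc k"] assms(1,2) show ?thesis
    unfolding steep_chord_def by auto
qed

(* The stack after step k: the corners up to k, topped by non-corners beyond the last corner along
   which the chords are nearly as steep as the hull edge leaving that corner. *)
definition hull_inv :: "nat \<Rightarrow> nat list \<Rightarrow> bool" where
  "hull_inv k st \<longleftrightarrow> (\<exists>ns. st = ns @ corners_upto k \<and> set ns \<subseteq> {last_corner k<..k} - I \<and>
     successively (steep_chord (min_slope k) r) (ns @ [last_corner k]))"

lemma hull_inv_sch_pop:
  assumes "hull_inv k st" "k < d"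
  obtains ns where "sch_pop E r (Suc k) st = ns @ corners_upto k"
    and "set ns \<subseteq> {last_corner k<..k} - I"
    and "successively (steep_chord (min_slope k) r) (ns @ [last_corner k])"
    and "\<And>n ns'. ns = n # ns' \<Longrightarrow> \<not> sch_pops E r n (hd (ns' @ [last_corner k])) (Suc k)"
proof -
  define c where "c = last_corner k"
  obtain ns where st: "st = ns @ corners_upto k" and ns: "set ns \<subseteq> {c<..k} - I"
    and chain: "successively (steep_chord (min_slope k) r) (ns @ [c])"
    using assms(1) unfolding hull_inv_def c_def by blast
  obtain cs where cs: "corners_upto k = c # cs" unfolding c_def by (rule corners_upto_Cons)
  obtain j where "sch_pop E r (Suc k) st = drop j ns @ corners_upto k"
    and "\<And>n ns'. drop j ns = n # ns' \<Longrightarrow> \<not> sch_pops E r n (hd (ns' @ [c])) (Suc k)"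
    using sch_pop_append[OF sch_pop_corners_upto[OF assms(2)], of ns] cs st
    by (metis hd_append list.distinct(1) list.sel(1))
  moreover have "successively (steep_chord (min_slope k) r) (drop j ns @ [c])"
    using chain by (metis append_take_drop_id append.assoc successively_append_iff)
  moreover have "set (drop j ns) \<subseteq> {c<..k} - I" using ns set_drop_subset by fast
  ultimately show thesis using that unfolding c_def by blast
qed

lemma hull_inv_step:
  assumes "hull_inv k st" "k < d"
  shows "hull_inv (Suc k) (Suc k # sch_pop E r (Suc k) st)"
proof -
  define c where "c = last_corner k"
  obtain ns where popped: "sch_pop E r (Suc k) st = ns @ corners_upto k"
    and ns: "set ns \<subseteq> {c<..k} - I" and chain: "successively (steep_chord (min_slope k) r) (ns @ [c])"
    and kept: "\<And>n ns'. ns = n # ns' \<Longrightarrow> \<not> sch_pops E r n (hd (ns' @ [c])) (Suc k)"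
    using hull_inv_sch_pop[OF assms] unfolding c_def by blast
  have top: "steep_chord (min_slope k) r n (hd (ns' @ [c]))" if "ns = n # ns'" for n ns'
    using chain that by (cases ns') auto
  show ?thesis
  proof (cases "Suc k \<in> I")
    case True
    have "ns = []"
    proof (rule ccontr)
      assume "ns \<noteq> []"
      then obtain n ns' where n: "ns = n # ns'" by (cases ns) auto
      with top ns True assms(2) have "sch_pops E r n (hd (ns' @ [c])) (Suc k)"
        unfolding c_def by (intro sch_pops_at_corner) auto
      with kept n show False by blast
    qed
    with popped True show ?thesis
      unfolding hull_inv_def by (intro exI[of _ "[]"]) (simp add: corners_upto_Suc)
  next
    case False
    have "steep_chord (min_slope k) r (Suc k) (hd (ns @ [c]))"
    proof (cases ns)
      case Nil
      with False assms(2) show ?thesis unfolding c_def by (simp add: steep_chord_last_corner)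
    next
      case (Cons n ns')
      with ns top kept assms(2) show ?thesis by (intro steep_chord_if_not_popped) auto
    qed
    with chain have "successively (steep_chord (min_slope k) r) (Suc k # ns @ [c])"
      by (simp add: successively_Cons)
    with popped False ns last_corner_spec[of k] show ?thesis
      unfolding hull_inv_def c_def by (intro exI[of _ "Suc k # ns"]) (auto simp: corners_upto_Suc)
  qed
qed

lemma hull_inv_foldl: "k \<le> d \<Longrightarrow> hull_inv k (foldl (\<lambda>st i. i # sch_pop E r i st) [0] [1..<Suc k])"
proof (induction k)
  case 0
  then show ?case unfolding hull_inv_def by (simp add: corners_upto_0)
next
  case (Suc k)
  then show ?case using hull_inv_step[of k] by simp
qed

lemma foldl_sch_pop_eq_corners:
  "rev (foldl (\<lambda>st i. i # sch_pop E r i st) [0] [1..<Suc d]) = sorted_list_of_set I"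
proof -
  obtain ns where st: "foldl (\<lambda>st i. i # sch_pop E r i st) [0] [1..<Suc d] = ns @ corners_upto d"
    and ns: "set ns \<subseteq> {last_corner d<..d}"
    using hull_inv_foldl[of d] unfolding hull_inv_def by blast
  have "last_corner d = d" using last_corner_spec[of d] d_corner by (meson disjoint_iff greaterThanAtMost_iff le_neq_implies_less order_refl)
  with ns st have "rev (foldl (\<lambda>st i. i # sch_pop E r i st) [0] [1..<Suc d]) = filter (\<lambda>j. j \<in> I) [0..<Suc d]"
    by (simp add: corners_upto_def rev_filter)
  also have "\<dots> = sorted_list_of_set I"
  proof -
    have "finite I" using corners_subset finite_subset by blast
    moreover have "I \<subseteq> {0..<Suc d}" using corners_subset by auto
    then have "set (filter (\<lambda>j. j \<in> I) [0..<Suc d]) = I" by (auto simp del: upt_Suc)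
    ultimately show ?thesis
      by (intro strict_sorted_equal sorted_wrt_filter sorted_wrt_upt)
        (simp_all add: strict_sorted_list_of_set)
  qed
  finally show ?thesis .
qed

end

lemma strict_convex_hull_eq_corners:
  assumes "perturbed_hull d I s L r \<delta> \<eta> (sch_E N d \<rho>) gap"
  shows "strict_convex_hull N d r \<rho> = sorted_list_of_set I"
  using perturbed_hull.foldl_sch_pop_eq_corners[OF assms] by (simp add: strict_convex_hull_def)

section \<open>Root moduli and the main theorem\<close>

lemma exists_ascent:
  fixes x :: "nat \<Rightarrow> 'a::linorder"
  assumes "i \<le> j" "x i < x j"
  obtains k where "i \<le> k" "k < j" "x k < x (Suc k)"
proof -
  have "\<exists>k. i \<le> k \<and> k < j \<and> x k < x (Suc k)"
  proof (rule ccontr)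
    assume no_ascent: "\<not> ?thesis"
    have "x m \<le> x i" if "i \<le> m" "m \<le> j" for m
      using that
    proof (induction m rule: dec_induct)
      case (step n)
      then have "\<not> x n < x (Suc n)" using no_ascent by auto
      with step show ?case by simp
    qed simp
    from this[of j] assms show False by simp
  qed
  with that show thesis by blast
qed

lemma min_ascent_ratio:
  fixes x :: "nat \<Rightarrow> real"
  assumes pos: "\<And>i. 1 \<le> i \<Longrightarrow> i \<le> d \<Longrightarrow> 0 < x i"
    and mono: "\<And>i j. 1 \<le> i \<Longrightarrow> i \<le> j \<Longrightarrow> j \<le> d \<Longrightarrow> x i \<le> x j"
    and notall: "\<exists>i\<in>{1..d}. \<exists>j\<in>{1..d}. x i \<noteq> x j"
    and \<rho>: "\<rho> = Min {x (i + 1) / x i | i. 1 \<le> i \<and> i < d \<and> x i < x (i + 1)}"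
  shows "1 < \<rho>" "\<And>k. 1 \<le> k \<Longrightarrow> k < d \<Longrightarrow> x k < x (Suc k) \<Longrightarrow> \<rho> * x k \<le> x (Suc k)"
proof -
  define S where "S = {x (i + 1) / x i | i. 1 \<le> i \<and> i < d \<and> x i < x (i + 1)}"
  obtain i j where ij0: "i \<in> {1..d}" "j \<in> {1..d}" "x i \<noteq> x j" using notall by blast
  have "\<exists>i j. 1 \<le> i \<and> i \<le> j \<and> j \<le> d \<and> x i < x j"
  proof (cases "i \<le> j")
    case True
    with ij0 mono[of i j] show ?thesis by (intro exI[of _ i] exI[of _ j]) auto
  next
    case False
    with ij0 mono[of j i] show ?thesis by (intro exI[of _ j] exI[of _ i]) auto
  qed
  then obtain i j where ij: "1 \<le> i" "i \<le> j" "j \<le> d" "x i < x j" by blast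
  obtain k where "i \<le> k" "k < j" "x k < x (Suc k)" using exists_ascent[OF ij(2,4)] .
  with ij have "S \<noteq> {}" unfolding S_def by force
  moreover have "finite S"
    by (rule finite_subset[of _ "(\<lambda>i. x (i + 1) / x i) ` {1..<d}"]) (auto simp: S_def)
  ultimately have "\<rho> \<in> S" unfolding \<rho> S_def[symmetric] by (intro Min_in)
  then show "1 < \<rho>" using pos by (auto simp: S_def)
  show "\<rho> * x k \<le> x (Suc k)" if "1 \<le> k" "k < d" "x k < x (Suc k)" for k
  proof -
    have "\<rho> \<le> x (Suc k) / x k"
      unfolding \<rho> S_def[symmetric] using \<open>finite S\<close> that by (intro Min_le) (auto simp: S_def)
    then show ?thesis using pos[of k] that by (simp add: pos_le_divide_eq mult.commute)
  qed
qed

lemma perturbed_hull_graeffe: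
  fixes \<zeta> :: "nat \<Rightarrow> complex" and c :: complex and r :: "nat \<Rightarrow> ereal"
  assumes sorted: "\<And>i j. 1 \<le> i \<Longrightarrow> i \<le> j \<Longrightarrow> j \<le> d \<Longrightarrow> norm (\<zeta> i) \<le> norm (\<zeta> j)"
    and nonzero: "\<And>i. 1 \<le> i \<Longrightarrow> i \<le> d \<Longrightarrow> \<zeta> i \<noteq> 0" and "c \<noteq> 0"
    and gap: "\<And>k. 1 \<le> k \<Longrightarrow> k < d \<Longrightarrow> norm (\<zeta> k) < norm (\<zeta> (Suc k)) \<Longrightarrow>
                \<rho> * norm (\<zeta> k) \<le> norm (\<zeta> (Suc k))"
    and "0 < d" "1 < \<rho>" and big: "8 * (real d * ln 2) < 2 ^ N * ln \<rho>"
    and g: "g = smult (c ^ 2 ^ N) (\<Prod>i=1..d. [:- (\<zeta> i ^ 2 ^ N), 1:])"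
    and r: "\<And>k. r k = (if coeff g k = 0 then \<infinity> else ereal (- ln (norm (coeff g k)) / 2 ^ N))"
  shows "perturbed_hull d ({0, d} \<union> {i. 1 \<le> i \<and> i \<le> d - 1 \<and> norm (\<zeta> i) < norm (\<zeta> (i + 1))})
           (\<lambda>k. ln (norm (\<zeta> k))) (\<lambda>k. - ln (norm c * (\<Prod>i\<in>{k<..d}. norm (\<zeta> i)))) r
           (- ln (1 - 2 ^ d / \<rho> ^ 2 ^ N) / 2 ^ N) (real d * ln 2 / 2 ^ N) (sch_E N d \<rho>) (ln \<rho>)"
    (is "perturbed_hull d ?I ?s ?L r ?\<delta> ?\<eta> _ _")
proof
  have pos: "0 < norm (\<zeta> i)" if "1 \<le> i" "i \<le> d" for i using nonzero that by simp
  have "0 < (\<Prod>i\<in>{k<..d}. norm (\<zeta> i))" for k using pos by (intro prod_pos) auto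
  then have W: "0 < norm c * (\<Prod>i\<in>{k<..d}. norm (\<zeta> i))" for k using \<open>c \<noteq> 0\<close> by simp
  show "?I \<subseteq> {0..d}" "0 \<in> ?I" "d \<in> ?I" by auto
  show "?s j \<le> ?s k" if "1 \<le> j" "j \<le> k" "k \<le> d" for j k
    using sorted[OF that] pos that by simp
  show "?L (Suc k) = ?L k + ?s (Suc k)" if "k < d" for k
  proof -
    have "{k<..d} = insert (Suc k) {Suc k<..d}" using that by auto
    then have split: "norm c * (\<Prod>i\<in>{k<..d}. norm (\<zeta> i))
        = norm (\<zeta> (Suc k)) * (norm c * (\<Prod>i\<in>{Suc k<..d}. norm (\<zeta> i)))" by simp
    show ?thesis unfolding split using pos[of "Suc k"] W[of "Suc k"] that by (simp add: ln_mult_pos)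
  qed
  show "k \<in> ?I \<longleftrightarrow> ?s k < ?s (Suc k)" if "1 \<le> k" "k < d" for k
  proof -
    have "k \<in> ?I \<longleftrightarrow> norm (\<zeta> k) < norm (\<zeta> (Suc k))" using that by auto
    with that pos[of k] pos[of "Suc k"] show ?thesis by simp
  qed
  show "?s k + ln \<rho> \<le> ?s (Suc k)" if "1 \<le> k" "k < d" "k \<in> ?I" for k
  proof -
    have "\<rho> * norm (\<zeta> k) \<le> norm (\<zeta> (Suc k))" using that gap[of k] by auto
    moreover have "0 < \<rho> * norm (\<zeta> k)" using that pos[of k] \<open>1 < \<rho>\<close> by simp
    ultimately have "ln (\<rho> * norm (\<zeta> k)) \<le> ?s (Suc k)" by (rule ln_mono)
    then show ?thesis using that pos[of k] \<open>1 < \<rho>\<close> by (simp add: ln_mult_pos)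
  qed
  have "2 ^ d / \<rho> ^ 2 ^ N < (1::real)"
    using graeffe_ratio_small(2)[OF \<open>0 < d\<close> \<open>1 < \<rho>\<close> big] by linarith
  then have \<rho>: "0 < \<rho>" "2 ^ d < \<rho> ^ 2 ^ N" using \<open>1 < \<rho>\<close> by simp_all
  have M: "0 < (2::nat) ^ N" by simp
  show "\<exists>v. r k = ereal v \<and> \<bar>v - ?L k\<bar> \<le> ?\<delta>" if "k \<in> ?I" for k
  proof -
    have "k \<le> d" "1 \<le> k \<Longrightarrow> k < d \<Longrightarrow> \<rho> * norm (\<zeta> k) \<le> norm (\<zeta> (Suc k))" using that gap by auto
    from neg_ln_coeff_graeffe_dominant[where M = "2 ^ N", OF sorted nonzero \<open>c \<noteq> 0\<close> M \<rho> this]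
    show ?thesis by (simp add: r g)
  qed
  show "r k = \<infinity> \<or> (\<exists>v. r k = ereal v \<and> ?L k - ?\<eta> \<le> v)" for k
    using neg_ln_coeff_graeffe_lower[where M = "2 ^ N" and k = k, OF sorted nonzero \<open>c \<noteq> 0\<close> M]
    by (simp add: r g)
  show "0 \<le> ?\<delta>" "0 \<le> ?\<eta>" "2 * (?\<eta> + ?\<delta>) < sch_E N d \<rho>" "sch_E N d \<rho> + ?\<eta> + 4 * ?\<delta> \<le> ln \<rho>"
    using sch_E_bounds[OF \<open>0 < d\<close> \<open>1 < \<rho>\<close> big] by simp_all
qed

theorem mainTheorem1:
  fixes f :: "complex poly" and \<zeta> :: "nat \<Rightarrow> complex" and N d :: nat and \<rho> :: real
    and r :: "nat \<Rightarrow> ereal"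
  assumes deg: "degree f = d"
    and f0: "poly f 0 \<noteq> 0"
    and roots: "f = smult (lead_coeff f) (\<Prod>i=1..d. [:- \<zeta> i, 1:])"
    and sorted: "\<And>i j. 1 \<le> i \<Longrightarrow> i \<le> j \<Longrightarrow> j \<le> d \<Longrightarrow> norm (\<zeta> i) \<le> norm (\<zeta> j)"
    and notall: "\<exists>i\<in>{1..d}. \<exists>j\<in>{1..d}. norm (\<zeta> i) \<noteq> norm (\<zeta> j)"
    and rho: "\<rho> = Min {norm (\<zeta> (i+1)) / norm (\<zeta> i) | i. 1 \<le> i \<and> i < d \<and> norm (\<zeta> i) < norm (\<zeta> (i+1))}"
    and Npos: "N > 0"
    and Nbig: "real N > 3 + log 2 (real d * ln 2 / ln \<rho>)"
    and r_def: "\<And>i. r i = (if coeff ((graeffe ^^ N) f) i = 0 then \<infinity>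
                   else ereal (- ln (norm (coeff ((graeffe ^^ N) f) i)) / 2 ^ N))"
  shows "strict_convex_hull N d (\<lambda>i. r i) \<rho> =
           sorted_list_of_set ({0, d} \<union> {i. 1 \<le> i \<and> i \<le> d - 1 \<and> norm (\<zeta> i) < norm (\<zeta> (i+1))})"
proof -
  define c where "c = lead_coeff f"
  have "c \<noteq> 0" using f0 by (auto simp: c_def)
  have nonzero: "\<zeta> i \<noteq> 0" if "1 \<le> i" "i \<le> d" for i
    using f0 arg_cong[OF roots, of "\<lambda>p. poly p 0"] that by (auto simp: poly_prod)
  have "1 < \<rho>" and gap: "\<And>k. 1 \<le> k \<Longrightarrow> k < d \<Longrightarrow> norm (\<zeta> k) < norm (\<zeta> (Suc k)) \<Longrightarrow>
      \<rho> * norm (\<zeta> k) \<le> norm (\<zeta> (Suc k))"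
    using min_ascent_ratio[of d "\<lambda>i. norm (\<zeta> i)" \<rho>] nonzero sorted notall rho by auto
  have "0 < d" using notall by auto
  have G: "(graeffe ^^ N) f = smult (c ^ 2 ^ N) (\<Prod>i=1..d. [:- (\<zeta> i ^ 2 ^ N), 1:])"
    using arg_cong[OF roots, of "graeffe ^^ N"] funpow_graeffe_smult_prod_linear[of "{1..d}" c N \<zeta>]
      \<open>c \<noteq> 0\<close> by (simp add: c_def)
  have big: "8 * (real d * ln 2) < 2 ^ N * ln \<rho>"
    using two_pow_mult_ln_gt[OF \<open>0 < d\<close> \<open>1 < \<rho>\<close> Nbig] .
  from perturbed_hull_graeffe[OF sorted nonzero \<open>c \<noteq> 0\<close> gap \<open>0 < d\<close> \<open>1 < \<rho>\<close> big G r_def]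
  show ?thesis by (rule strict_convex_hull_eq_corners)
qed

end
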